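(* Let $c:[\omega_2]^2\to\omega$, let $k\in\omega$, and let $A\in[\omega_1]^{\aleph_1}$ and $B\in[\omega_2\setminus\omega_1]^{\aleph_1}$ satisfy: (1) for any $\alpha_0,\alpha_1\in A$ there are uncountably many $\beta\in B$ with $c(\alpha_0,\beta)=k=c(\alpha_1,\beta)$; and (2) for any $\beta_0\in B$ there are uncountably many $\alpha\in A$ with $c(\alpha,\beta_0)=k$. Then $(A\cup B, c^{-1}(k)\cap[A\cup B]^2)$ is highly connected.
   Context: A graph $G=(X,E)$ is highly connected if for every $Y\subseteq X$ with $|Y|<|X|$, the induced subgraph $(X\setminus Y,E\cap[X\setminus Y]^2)$ is connected. *)

theory Defs
  imports Main "HOL-Library.Countable_Set"
begin

text \<open>The ambient ordinal omega_2 is represented by a type carrying a well-order r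
  which is a cardinal order of order type cardSuc (cardSuc natLeq) = omega_2.\<close>

definition is_omega2 :: "'a rel \<Rightarrow> bool" where
  "is_omega2 r \<longleftrightarrow> Card_order r \<and> Field r = UNIV \<and>
     (r, cardSuc (cardSuc natLeq)) \<in> ordIso"

definition omega1_part :: "'a rel \<Rightarrow> 'a set" where
  "omega1_part r = {x. countable (underS r x)}"

definition size_aleph1 :: "'a set \<Rightarrow> bool" where
  "size_aleph1 A \<longleftrightarrow> (card_of A, cardSuc natLeq) \<in> ordIso"

definition graph_connected :: "'a set \<Rightarrow> 'a set set \<Rightarrow> bool" where
  "graph_connected V E \<longleftrightarrow>
     (\<forall>u\<in>V. \<forall>v\<in>V. \<exists>p. p \<noteq> [] \<and> hd p = u \<and> last p = v \<and> set p \<subseteq> V \<and>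
        (\<forall>i < length p - 1. {p ! i, p ! Suc i} \<in> E))"

definition highly_connected :: "'a set \<Rightarrow> 'a set set \<Rightarrow> bool" where
  "highly_connected X E \<longleftrightarrow>
     (\<forall>Y. Y \<subseteq> X \<longrightarrow> (card_of Y, card_of X) \<in> ordLess \<longrightarrow>
        graph_connected (X - Y) (E \<inter> {e. e \<subseteq> X - Y}))"

definition colour_class :: "('a set \<Rightarrow> nat) \<Rightarrow> nat \<Rightarrow> 'a set \<Rightarrow> 'a set set" where
  "colour_class c k X = {e. e \<subseteq> X \<and> card e = 2 \<and> c e = k}"

end

theory Submission
  imports Defs "HOL-Library.Countable_Set_Type"
begin

text \<open>Removing a countable set Y leaves every vertex of B adjacent to some vertex of A,
  and every two vertices of A with a common neighbour in B, because the relevant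
  neighbourhoods are uncountable. Hence every vertex reaches A - Y, and A - Y lies in a
  single component. Y is countable because it is smaller than the aleph_1-sized A \<union> B.\<close>

fun walk :: "'a set set \<Rightarrow> 'a list \<Rightarrow> bool" where
  "walk E (x # y # xs) \<longleftrightarrow> {x, y} \<in> E \<and> walk E (y # xs)"
| "walk E _ \<longleftrightarrow> True"

lemma walk_Cons: "walk E (x # xs) \<longleftrightarrow> xs = [] \<or> {x, hd xs} \<in> E \<and> walk E xs"
  by (cases xs) auto

lemma walk_iff_nth: "walk E p \<longleftrightarrow> (\<forall>i < length p - 1. {p ! i, p ! Suc i} \<in> E)"
proof (induction p)
  case (Cons x xs)
  then show ?case
    by (cases xs) (auto simp: walk_Cons less_Suc_eq_0_disj hd_conv_nth)
qed simp

lemma walk_append_Cons: "walk E (xs @ [y]) \<Longrightarrow> walk E (y # ys) \<Longrightarrow> walk E (xs @ y # ys)"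
  by (induction xs) (auto simp: walk_Cons hd_append split: if_splits)

lemma walk_snoc: "walk E (xs @ [x, y]) \<longleftrightarrow> walk E (xs @ [x]) \<and> {x, y} \<in> E"
  by (induction xs) (auto simp: walk_Cons hd_append)

lemma walk_rev: "walk E (rev p) \<longleftrightarrow> walk E p"
  by (induction E p rule: walk.induct) (auto simp: walk_snoc insert_commute)

definition reachable :: "'a set \<Rightarrow> 'a set set \<Rightarrow> 'a \<Rightarrow> 'a \<Rightarrow> bool" where
  "reachable V E u v \<longleftrightarrow>
     (\<exists>p. p \<noteq> [] \<and> hd p = u \<and> last p = v \<and> set p \<subseteq> V \<and> walk E p)"

lemma graph_connected_iff_reachable:
  "graph_connected V E \<longleftrightarrow> (\<forall>u\<in>V. \<forall>v\<in>V. reachable V E u v)"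
  unfolding graph_connected_def reachable_def walk_iff_nth ..

lemma reachable_refl: "u \<in> V \<Longrightarrow> reachable V E u u"
  unfolding reachable_def by (intro exI[of _ "[u]"]) auto

lemma reachable_edge: "u \<in> V \<Longrightarrow> v \<in> V \<Longrightarrow> {u, v} \<in> E \<Longrightarrow> reachable V E u v"
  unfolding reachable_def by (intro exI[of _ "[u, v]"]) auto

lemma reachable_sym: "reachable V E u v \<Longrightarrow> reachable V E v u"
  unfolding reachable_def by (metis hd_rev last_rev rev_is_Nil_conv set_rev walk_rev)

lemma reachable_trans:
  assumes "reachable V E u v" "reachable V E v w"
  shows "reachable V E u w"
proof -
  obtain p where p: "p \<noteq> []" "hd p = u" "last p = v" "set p \<subseteq> V" "walk E p"
    using assms(1) unfolding reachable_def by blast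
  obtain q where q: "q \<noteq> []" "hd q = v" "last q = w" "set q \<subseteq> V" "walk E q"
    using assms(2) unfolding reachable_def by blast
  have p_split: "p = butlast p @ [v]" and q_split: "q = v # tl q"
    using p q by (metis append_butlast_last_id, metis list.collapse)
  have "walk E (butlast p @ q)"
    using walk_append_Cons[of E "butlast p" v "tl q"] p(5) q(5) p_split q_split by simp
  moreover have "set (butlast p @ q) \<subseteq> V"
    using p(4) q(4) in_set_butlastD by fastforce
  moreover have "hd (butlast p @ q) = u"
    using p(2) q(2) p_split by (cases "butlast p") auto
  ultimately show ?thesis
    unfolding reachable_def using q by (intro exI[of _ "butlast p @ q"]) auto
qed

lemma graph_connected_via_hub:
  assumes "S \<subseteq> V"
    and to_hub: "\<And>u. u \<in> V \<Longrightarrow> \<exists>s\<in>S. reachable V E u s"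
    and common_neighbour: "\<And>s t. s \<in> S \<Longrightarrow> t \<in> S \<Longrightarrow> \<exists>m\<in>V. {s, m} \<in> E \<and> {m, t} \<in> E"
  shows "graph_connected V E"
  unfolding graph_connected_iff_reachable
proof (intro ballI)
  fix u v assume "u \<in> V" "v \<in> V"
  then obtain s t where "s \<in> S" "t \<in> S" "reachable V E u s" "reachable V E v t"
    using to_hub by meson
  moreover obtain m where "m \<in> V" "{s, m} \<in> E" "{m, t} \<in> E"
    using common_neighbour \<open>s \<in> S\<close> \<open>t \<in> S\<close> by blast
  ultimately show "reachable V E u v"
    using assms(1) by (meson reachable_edge reachable_sym reachable_trans subsetD)
qed

lemma countable_if_ordLess_card_of_le_aleph1:
  assumes "(card_of X, cardSuc natLeq) \<in> ordLeq" and "(card_of Y, card_of X) \<in> ordLess"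
  shows "countable Y"
proof -
  have "(card_of Y, cardSuc natLeq) \<in> ordLess"
    using assms ordLess_ordLeq_trans by blast
  then have "(card_of Y, natLeq) \<in> ordLeq"
    using cardSuc_ordLeq_ordLess natLeq_Card_order card_of_Card_order by blast
  then show ?thesis
    using countable_card_le_natLeq by blast
qed

lemma size_aleph1_Un_ordLeq:
  assumes "size_aleph1 A" "size_aleph1 B"
  shows "(card_of (A \<union> B), cardSuc natLeq) \<in> ordLeq"
  using assms unfolding size_aleph1_def
  by (metis Field_natLeq cardSuc_Card_order cardSuc_finite card_of_Un_ordLeq_infinite_Field
      infinite_UNIV_nat natLeq_Card_order ordIso_iff_ordLeq)

lemma uncountable_diff_countable_nonempty:
  "\<not> countable X \<Longrightarrow> countable Y \<Longrightarrow> \<exists>x\<in>X. x \<notin> Y"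
  by (metis Diff_iff countable_empty equals0I uncountable_minus_countable)

lemma colour_class_restrict:
  "colour_class c k X \<inter> {e. e \<subseteq> X - Y} = colour_class c k (X - Y)"
  unfolding colour_class_def by auto

lemma doubleton_in_colour_class:
  "a \<in> X \<Longrightarrow> b \<in> X \<Longrightarrow> a \<noteq> b \<Longrightarrow> c {a, b} = k \<Longrightarrow> {a, b} \<in> colour_class c k X"
  unfolding colour_class_def by auto

lemma graph_connected_colour_class_diff_countable:
  assumes "A \<inter> B = {}" and "countable Y"
    and common: "\<forall>\<alpha>0\<in>A. \<forall>\<alpha>1\<in>A. \<not> countable {\<beta>\<in>B. c {\<alpha>0, \<beta>} = k \<and> c {\<alpha>1, \<beta>} = k}"
    and to_A: "\<forall>\<beta>0\<in>B. \<not> countable {\<alpha>\<in>A. c {\<alpha>, \<beta>0} = k}"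
  shows "graph_connected (A \<union> B - Y) (colour_class c k (A \<union> B - Y))" (is "graph_connected ?V ?E")
proof (rule graph_connected_via_hub[of "A - Y"])
  fix u assume u: "u \<in> ?V"
  show "\<exists>a\<in>A - Y. reachable ?V ?E u a"
  proof (cases "u \<in> A")
    case True
    then show ?thesis
      using u by (intro bexI[of _ u] reachable_refl) auto
  next
    case False
    then have "\<not> countable {\<alpha>\<in>A. c {\<alpha>, u} = k}"
      using u to_A by blast
    then obtain a where "a \<in> {\<alpha>\<in>A. c {\<alpha>, u} = k}" "a \<notin> Y"
      using uncountable_diff_countable_nonempty[OF _ \<open>countable Y\<close>] by meson
    then have a: "a \<in> A - Y" "c {u, a} = k"
      by (simp_all add: insert_commute)
    have "{u, a} \<in> ?E"
      using u a False by (intro doubleton_in_colour_class) auto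
    then show ?thesis
      using u a(1) by (intro bexI[of _ a] reachable_edge) auto
  qed
next
  fix a b assume a: "a \<in> A - Y" and b: "b \<in> A - Y"
  then have "\<not> countable {\<beta>\<in>B. c {a, \<beta>} = k \<and> c {b, \<beta>} = k}"
    using common by blast
  then obtain m where "m \<in> {\<beta>\<in>B. c {a, \<beta>} = k \<and> c {b, \<beta>} = k}" "m \<notin> Y"
    using uncountable_diff_countable_nonempty[OF _ \<open>countable Y\<close>] by meson
  then have m: "m \<in> B - Y" "c {a, m} = k" "c {m, b} = k"
    by (simp_all add: insert_commute)
  have "a \<noteq> m" "m \<noteq> b"
    using a b m(1) \<open>A \<inter> B = {}\<close> by blast+
  then have "{a, m} \<in> ?E" "{m, b} \<in> ?E"
    using a b m by (auto intro!: doubleton_in_colour_class)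
  then show "\<exists>m\<in>?V. {a, m} \<in> ?E \<and> {m, b} \<in> ?E"
    using m(1) by blast
qed blast

theorem mainTheorem3:
  fixes r :: "'a rel" and c :: "'a set \<Rightarrow> nat" and k :: nat and A B :: "'a set"
  assumes "is_omega2 r"
    and "A \<subseteq> omega1_part r" and "size_aleph1 A"
    and "B \<subseteq> UNIV - omega1_part r" and "size_aleph1 B"
    and "\<forall>\<alpha>0\<in>A. \<forall>\<alpha>1\<in>A. \<not> countable {\<beta>\<in>B. c {\<alpha>0, \<beta>} = k \<and> c {\<alpha>1, \<beta>} = k}"
    and "\<forall>\<beta>0\<in>B. \<not> countable {\<alpha>\<in>A. c {\<alpha>, \<beta>0} = k}"
  shows "highly_connected (A \<union> B) (colour_class c k (A \<union> B))"
  unfolding highly_connected_def colour_class_restrict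
proof (intro allI impI)
  fix Y assume "Y \<subseteq> A \<union> B" and Y_small: "(card_of Y, card_of (A \<union> B)) \<in> ordLess"
  have "countable Y"
    by (rule countable_if_ordLess_card_of_le_aleph1[OF size_aleph1_Un_ordLeq[OF assms(3,5)] Y_small])
  moreover have "A \<inter> B = {}"
    using assms(2,4) by auto
  ultimately show "graph_connected (A \<union> B - Y) (colour_class c k (A \<union> B - Y))"
    using graph_connected_colour_class_diff_countable assms(6,7) by blast
qed

end
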